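(* Let $$c(k,d):=\begin{cases}\dfrac{\pi^2k^2}{(2j_{0,1}+\pi(k-1))^2} & \text{if } d=2,\\[2mm] \dfrac{\pi^2k^2}{4\,j_{d/2-1,(k+1)/2}^2} & \text{if } d\ge 3 \text{ and } k \text{ odd},\\[2mm] \dfrac{\pi^2k^2}{\left(j_{d/2-1,k/2}+j_{d/2-1,k/2+1}\right)^2} & \text{if } d\ge 3\text{ and } k \text{ even},\end{cases}$$ for $k\in\mathbb{N}$, $d\ge 2$. Then: (1) $c(k,d)<1$ for all $k\in\mathbb{N}$ and $d\ge 2$; (2) for each fixed $d\ge 2$, $c(k,d)\to 1$ as $k\to\infty$; (3) for each fixed $k\in\mathbb{N}$ there exists a constant $C_k>0$ such that $c(k,d)\le C_k/d^2$ for all $d\ge 2$.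
   Context: $j_{\nu,m}$ denotes the $m$-th positive zero of the Bessel function $J_\nu$ of the first kind of order $\nu$. *)

theory Defs
  imports "HOL-Analysis.Analysis"
begin

definition bessel_J :: "real \<Rightarrow> real \<Rightarrow> real" where
  "bessel_J nu x = (\<Sum>m. (-1)^m / (fact m * Gamma (real m + nu + 1)) * (x/2) powr (2 * real m + nu))"

definition bessel_zero :: "real \<Rightarrow> nat \<Rightarrow> real" where
  "bessel_zero nu m = (THE x. 0 < x \<and> bessel_J nu x = 0 \<and>
      card {y. 0 < y \<and> y < x \<and> bessel_J nu y = 0} = m - 1)"

definition c_kd :: "nat \<Rightarrow> nat \<Rightarrow> real" where
  "c_kd k d =
    (if d = 2 then pi^2 * real k^2 / (2 * bessel_zero 0 1 + pi * (real k - 1))^2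
     else if odd k then pi^2 * real k^2 / (4 * (bessel_zero (real d / 2 - 1) ((k + 1) div 2))^2)
     else pi^2 * real k^2 / (bessel_zero (real d / 2 - 1) (k div 2) + bessel_zero (real d / 2 - 1) (k div 2 + 1))^2)"

end

theory Submission
  imports Defs
begin

text \<open>Write J_nu(x) = (x/2)^nu F(x^2/4) with F an entire power series. Then
  u(x) = x^(nu + 1/2) F(x^2/4) has the same positive zeros as J_nu and solves
  u'' + (1 - c/x^2) u = 0 with c = nu^2 - 1/4. Comparison with sine waves (Sturm) shows that
  consecutive zeros are at least pi apart when c \<ge> 0, and that every interval of length pi/w,
  w < 1, far enough out contains a zero; hence j_{nu,m} = m pi + O(1) from both sides.
  Positivity of F on [0, 1) gives j_{nu,m} \<ge> 2, and convexity of u below sqrt c gives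
  j_{nu,1} > sqrt c. Writing c(k,d) = (pi k / D(k,d))^2, these yield
  pi k < D(k,d) \<le> pi k / w + O(1) for every w < 1 and D(k,d) \<ge> d/4, which are the three claims.\<close>

lemma gronwall_zero:
  fixes E E' :: "real \<Rightarrow> real"
  assumes deriv: "\<And>t. min x0 x \<le> t \<Longrightarrow> t \<le> max x0 x \<Longrightarrow> (E has_real_derivative E' t) (at t)"
    and bound: "\<And>t. min x0 x \<le> t \<Longrightarrow> t \<le> max x0 x \<Longrightarrow> \<bar>E' t\<bar> \<le> L * E t"
    and "E x0 = 0" "E x \<ge> 0"
  shows "E x = 0"
proof (cases "x0 \<le> x")
  case True
  have "E x * exp (- L * x) \<le> E x0 * exp (- L * x0)"
  proof (rule DERIV_nonpos_imp_nonincreasing[of x0 x "\<lambda>t. E t * exp (- L * t)"])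
    fix t assume t: "x0 \<le> t" "t \<le> x"
    have "E' t \<le> L * E t" using bound[of t] t True by auto
    then have "(E' t - L * E t) * exp (- L * t) \<le> 0" by (simp add: mult_nonpos_nonneg)
    moreover have "((\<lambda>t. E t * exp (- L * t)) has_real_derivative (E' t - L * E t) * exp (- L * t)) (at t)"
      using t True by (auto intro!: derivative_eq_intros deriv simp: algebra_simps)
    ultimately show "\<exists>y. ((\<lambda>t. E t * exp (- L * t)) has_real_derivative y) (at t) \<and> y \<le> 0" by blast
  qed (fact True)
  then show ?thesis using assms(3,4) by (simp add: mult_le_0_iff antisym)
next
  case False
  have "E x * exp (L * x) \<le> E x0 * exp (L * x0)"
  proof (rule DERIV_nonneg_imp_nondecreasing[of x x0 "\<lambda>t. E t * exp (L * t)"])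
    fix t assume t: "x \<le> t" "t \<le> x0"
    have "- E' t \<le> L * E t" using bound[of t] t False by auto
    then have "(E' t + L * E t) * exp (L * t) \<ge> 0" by simp
    moreover have "((\<lambda>t. E t * exp (L * t)) has_real_derivative (E' t + L * E t) * exp (L * t)) (at t)"
      using t False by (auto intro!: derivative_eq_intros deriv simp: algebra_simps)
    ultimately show "\<exists>y. ((\<lambda>t. E t * exp (L * t)) has_real_derivative y) (at t) \<and> y \<ge> 0" by blast
  qed (use False in simp)
  then show ?thesis using assms(3,4) by (simp add: mult_le_0_iff antisym)
qed

lemma DERIV_nonpos_if_left_ge:
  fixes f :: "real \<Rightarrow> real"
  assumes "(f has_real_derivative D) (at b)" "a < b" "\<And>t. a < t \<Longrightarrow> t < b \<Longrightarrow> f b \<le> f t"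
  shows "D \<le> 0"
proof (rule tendsto_upperbound)
  show "((\<lambda>t. (f t - f b) / (t - b)) \<longlongrightarrow> D) (at_left b)"
    using has_field_derivative_at_within[OF assms(1)] by (simp add: has_field_derivative_iff)
  show "eventually (\<lambda>t. (f t - f b) / (t - b) \<le> 0) (at_left b)"
    unfolding eventually_at_left_field using assms(2,3)
    by (intro exI[of _ a]) (auto intro!: divide_nonneg_neg)
qed simp

lemma nonzero_on_interval_same_sign:
  fixes f :: "real \<Rightarrow> real"
  assumes cont: "\<And>t. a < t \<Longrightarrow> t < b \<Longrightarrow> isCont f t"
    and nz: "\<And>t. a < t \<Longrightarrow> t < b \<Longrightarrow> f t \<noteq> 0"
  shows "(\<forall>t. a < t \<and> t < b \<longrightarrow> f t > 0) \<or> (\<forall>t. a < t \<and> t < b \<longrightarrow> f t < 0)"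
proof (rule ccontr)
  assume "\<not> ?thesis"
  then obtain t1 t2 where t: "a < t1" "t1 < b" "a < t2" "t2 < b" "f t1 < 0" "f t2 > 0"
    using nz by (metis linorder_neqE_linordered_idom)
  have "continuous_on {min t1 t2..max t1 t2} f"
    using t by (intro continuous_at_imp_continuous_on ballI cont) auto
  then obtain x where "min t1 t2 \<le> x" "x \<le> max t1 t2" "f x = 0"
    using IVT'[of f t1 0 t2] IVT2'[of f t1 0 t2] t by (cases "t1 \<le> t2") (auto simp: min_def max_def)
  then show False using nz[of x] t by (simp add: min_def max_def split: if_splits)
qed

lemma ratio_tendsto_1:
  fixes D :: "nat \<Rightarrow> real"
  assumes a: "a > 0" and lower: "\<And>k. k \<ge> 1 \<Longrightarrow> a * real k < D k"
    and upper: "\<And>w. 0 < w \<Longrightarrow> w < 1 \<Longrightarrow> \<exists>B. \<forall>k\<ge>1. D k \<le> a * real k / w + B"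
  shows "(\<lambda>k. a * real k / D k) \<longlonglongrightarrow> 1"
proof (rule order_tendstoI)
  fix y :: real assume "y < 1"
  define w where "w = (max y 0 + 1) / 2"
  have w: "0 < w" "w < 1" "y < w" using \<open>y < 1\<close> by (auto simp: w_def max_def)
  obtain B where B: "\<And>k. k \<ge> 1 \<Longrightarrow> D k \<le> a * real k / w + B" using upper[OF w(1,2)] by blast
  have "(\<lambda>k. w / (1 + w * B / a * inverse (real k))) \<longlonglongrightarrow> w / (1 + w * B / a * 0)"
    by (intro tendsto_intros lim_inverse_n) simp
  then have "eventually (\<lambda>k. y < w / (1 + w * B / a * inverse (real k))) sequentially"
    using w(3) by (intro order_tendstoD(1)) simp_all
  then show "eventually (\<lambda>k. y < a * real k / D k) sequentially"
    using eventually_ge_at_top[of "1::nat"]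
  proof eventually_elim
    case (elim k)
    have "0 < a * real k" using a elim(2) by simp
    then have pos: "0 < a * real k" "0 < D k" using lower[OF elim(2)] by linarith+
    have "0 < a * real k / w + B" using B[OF elim(2)] pos by linarith
    then have "0 < (a * real k / w + B) * w" using w by simp
    then have "B * w + a * real k \<noteq> 0" using w by (simp add: algebra_simps)
    moreover have "a \<noteq> 0" "real k \<noteq> 0" "w \<noteq> 0" using a elim(2) w by auto
    ultimately have "w / (1 + w * B / a * inverse (real k)) = a * real k / (a * real k / w + B)"
      by (simp add: field_simps)
    also have "\<dots> \<le> a * real k / D k"
      using pos B[OF elim(2)] by (intro divide_left_mono) auto
    finally show ?case using elim(1) by simp
  qed
next
  fix y :: real assume "y > 1"
  have "a * real k / D k < 1" if "k \<ge> 1" for k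
  proof -
    have "0 < a * real k" using a that by simp
    then show ?thesis using lower[OF that] by simp
  qed
  then show "eventually (\<lambda>k. a * real k / D k < y) sequentially"
    using \<open>y > 1\<close> by (intro eventually_sequentiallyI[of 1]) (auto intro: less_trans)
qed

section \<open>The power series of \<open>J\<^sub>\<nu>\<close>\<close>

definition bessel_coeff :: "real \<Rightarrow> nat \<Rightarrow> real" where
  "bessel_coeff nu m = (-1)^m / (fact m * Gamma (real m + nu + 1))"

lemma bessel_coeff_Suc:
  assumes "nu \<ge> 0"
  shows "bessel_coeff nu (Suc m) = - bessel_coeff nu m / ((real m + 1) * (real m + nu + 1))"
proof -
  have "real m + nu + 1 \<notin> \<int>\<^sub>\<le>\<^sub>0" using assms nonpos_Ints_nonpos by fastforce
  then have "Gamma (real (Suc m) + nu + 1) = (real m + nu + 1) * Gamma (real m + nu + 1)"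
    using Gamma_plus1[of "real m + nu + 1"] by (simp add: add_ac)
  then show ?thesis by (simp add: bessel_coeff_def mult_ac)
qed

lemma diffs_bessel_coeff:
  assumes "nu \<ge> 0"
  shows "diffs (bessel_coeff nu) m = - bessel_coeff nu m / (real m + nu + 1)"
proof -
  have "diffs (bessel_coeff nu) m = (real m + 1) * bessel_coeff nu (Suc m)"
    by (simp add: diffs_def add.commute)
  also have "\<dots> = (real m + 1) * (- bessel_coeff nu m) / ((real m + 1) * (real m + nu + 1))"
    by (simp only: bessel_coeff_Suc[OF assms] times_divide_eq_right)
  also have "\<dots> = - bessel_coeff nu m / (real m + nu + 1)"
    by (rule mult_divide_mult_cancel_left) simp
  finally show ?thesis .
qed

lemma summable_bessel_coeff:
  assumes "nu \<ge> 0"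
  shows "summable (\<lambda>m. bessel_coeff nu m * y ^ m)"
proof (rule summable_ratio_test[where c="1/2" and N="nat \<lceil>2 * \<bar>y\<bar>\<rceil>"])
  fix n assume "n \<ge> nat \<lceil>2 * \<bar>y\<bar>\<rceil>"
  then have "2 * \<bar>y\<bar> \<le> real n" by linarith
  moreover have "real n + 1 \<le> (real n + 1) * (real n + nu + 1)"
    using assms by (simp add: algebra_simps)
  ultimately have "2 * \<bar>y\<bar> \<le> (real n + 1) * (real n + nu + 1)" by linarith
  then have "\<bar>y\<bar> / ((real n + 1) * (real n + nu + 1)) \<le> 1/2"
    using assms by (simp add: divide_le_eq add_pos_nonneg)
  then have "\<bar>bessel_coeff nu n * y ^ n\<bar> * (\<bar>y\<bar> / ((real n + 1) * (real n + nu + 1)))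
      \<le> \<bar>bessel_coeff nu n * y ^ n\<bar> * (1/2)"
    by (intro mult_left_mono) auto
  then show "norm (bessel_coeff nu (Suc n) * y ^ Suc n) \<le> 1/2 * norm (bessel_coeff nu n * y ^ n)"
    using assms by (simp add: bessel_coeff_Suc[OF assms] abs_mult abs_divide power_abs mult_ac)
qed simp

definition bessel_F :: "real \<Rightarrow> real \<Rightarrow> real" where
  "bessel_F nu y = (\<Sum>m. bessel_coeff nu m * y ^ m)"

definition bessel_F' :: "real \<Rightarrow> real \<Rightarrow> real" where
  "bessel_F' nu y = (\<Sum>m. diffs (bessel_coeff nu) m * y ^ m)"

definition bessel_F'' :: "real \<Rightarrow> real \<Rightarrow> real" where
  "bessel_F'' nu y = (\<Sum>m. diffs (diffs (bessel_coeff nu)) m * y ^ m)"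

lemma summable_diffs_bessel_coeff:
  "nu \<ge> 0 \<Longrightarrow> summable (\<lambda>m. diffs (bessel_coeff nu) m * y ^ m)"
  by (rule termdiff_converges_all) (rule summable_bessel_coeff)

lemma summable_diffs_diffs_bessel_coeff:
  "nu \<ge> 0 \<Longrightarrow> summable (\<lambda>m. diffs (diffs (bessel_coeff nu)) m * y ^ m)"
  by (rule termdiff_converges_all) (rule summable_diffs_bessel_coeff)

lemma DERIV_bessel_F: "nu \<ge> 0 \<Longrightarrow> (bessel_F nu has_real_derivative bessel_F' nu y) (at y)"
  unfolding bessel_F_def[abs_def] bessel_F'_def
  by (rule termdiffs_strong_converges_everywhere) (rule summable_bessel_coeff)

lemma DERIV_bessel_F': "nu \<ge> 0 \<Longrightarrow> (bessel_F' nu has_real_derivative bessel_F'' nu y) (at y)"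
  unfolding bessel_F'_def[abs_def] bessel_F''_def
  by (rule termdiffs_strong_converges_everywhere) (rule summable_diffs_bessel_coeff)

lemma bessel_F_ode:
  assumes nu: "nu \<ge> 0"
  shows "y * bessel_F'' nu y + (nu + 1) * bessel_F' nu y + bessel_F nu y = 0"
proof -
  define d where "d = diffs (bessel_coeff nu)"
  have "(\<lambda>m. diffs d m * y ^ m) sums bessel_F'' nu y"
    unfolding d_def bessel_F''_def using summable_diffs_diffs_bessel_coeff[OF nu] by (rule summable_sums)
  from sums_mult[OF this, of y] have "(\<lambda>m. real m * d m * y ^ m) sums (y * bessel_F'' nu y)"
    using sums_Suc_iff[where f="\<lambda>m. real m * d m * y ^ m"] by (simp add: diffs_def mult_ac)
  moreover have "(\<lambda>m. (nu + 1) * (d m * y ^ m)) sums ((nu + 1) * bessel_F' nu y)"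
    unfolding d_def bessel_F'_def using summable_diffs_bessel_coeff[OF nu] by (intro sums_mult summable_sums)
  moreover have "(\<lambda>m. bessel_coeff nu m * y ^ m) sums bessel_F nu y"
    unfolding bessel_F_def using summable_bessel_coeff[OF nu] by (rule summable_sums)
  ultimately have "(\<lambda>m. real m * d m * y ^ m + (nu + 1) * (d m * y ^ m) + bessel_coeff nu m * y ^ m)
      sums (y * bessel_F'' nu y + (nu + 1) * bessel_F' nu y + bessel_F nu y)"
    by (intro sums_add)
  moreover have "real m * d m * y ^ m + (nu + 1) * (d m * y ^ m) + bessel_coeff nu m * y ^ m = 0" for m
  proof -
    have "real m * d m + (nu + 1) * d m = (real m + nu + 1) * d m" by (simp add: algebra_simps)
    also have "\<dots> = - bessel_coeff nu m"
      using nu by (simp add: d_def diffs_bessel_coeff add_pos_nonneg)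
    finally have "(real m * d m + (nu + 1) * d m + bessel_coeff nu m) * y ^ m = 0" by simp
    then show ?thesis by (simp add: algebra_simps)
  qed
  ultimately show ?thesis using sums_unique by fastforce
qed

lemma DERIV_bessel_F_comp [derivative_intros]:
  "nu \<ge> 0 \<Longrightarrow> (g has_real_derivative g') (at x within S) \<Longrightarrow>
    ((\<lambda>x. bessel_F nu (g x)) has_real_derivative bessel_F' nu (g x) * g') (at x within S)"
  by (rule DERIV_chain2[OF DERIV_bessel_F])

lemma DERIV_bessel_F'_comp [derivative_intros]:
  "nu \<ge> 0 \<Longrightarrow> (g has_real_derivative g') (at x within S) \<Longrightarrow>
    ((\<lambda>x. bessel_F' nu (g x)) has_real_derivative bessel_F'' nu (g x) * g') (at x within S)"
  by (rule DERIV_chain2[OF DERIV_bessel_F'])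

text \<open>Liouville normal form: \<open>bessel_u nu x = 2\<^sup>\<nu> sqrt x J_nu(x)\<close> for \<open>x > 0\<close>, which removes the
  first-order term from Bessel's equation.\<close>

definition bessel_u :: "real \<Rightarrow> real \<Rightarrow> real" where
  "bessel_u nu x = x powr (nu + 1/2) * bessel_F nu (x^2/4)"

definition bessel_u' :: "real \<Rightarrow> real \<Rightarrow> real" where
  "bessel_u' nu x = (nu + 1/2) * x powr (nu - 1/2) * bessel_F nu (x^2/4)
     + x powr (nu + 1/2) * (x/2) * bessel_F' nu (x^2/4)"

lemma DERIV_bessel_u:
  assumes "nu \<ge> 0" "x > 0"
  shows "(bessel_u nu has_real_derivative bessel_u' nu x) (at x)"
  unfolding bessel_u_def[abs_def] bessel_u'_def
  using assms by (auto intro!: derivative_eq_intros simp: algebra_simps)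

lemma DERIV_bessel_u':
  assumes nu: "nu \<ge> 0" and x: "x > 0"
  shows "(bessel_u' nu has_real_derivative - (1 - (nu^2 - 1/4) / x^2) * bessel_u nu x) (at x)"
proof -
  define P where "P = x powr (nu + 1/2)"
  have P1: "x powr (nu - 1/2) = P / x"
    using x powr_diff[of x "nu + 1/2" 1] by (simp add: P_def)
  have P2: "x powr (nu - 1/2 - 1) = P / x^2"
    using x powr_diff[of x "nu + 1/2" 2] by (simp add: P_def powr_numeral)
  obtain F F' F'' where F: "bessel_F nu (x^2/4) = F" "bessel_F' nu (x^2/4) = F'"
      "bessel_F'' nu (x^2/4) = F''"
    by blast
  have ode: "F = - ((x^2/4) * F'' + (nu + 1) * F')"
    using bessel_F_ode[OF nu, of "x^2/4"] unfolding F by linarith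
  have "(bessel_u' nu has_real_derivative
      (nu + 1/2) * ((nu - 1/2) * x powr (nu - 1/2 - 1)) * F + (nu + 1/2) * x powr (nu - 1/2) * (F' * (x/2))
      + (nu + 1/2) * x powr (nu - 1/2) * (x/2) * F' + P * (1/2) * F' + P * (x/2) * (F'' * (x/2))) (at x)"
    unfolding bessel_u'_def[abs_def] P_def F[symmetric] using nu x
    by (auto intro!: derivative_eq_intros simp: power2_eq_square field_simps)
  moreover have "(nu + 1/2) * ((nu - 1/2) * x powr (nu - 1/2 - 1)) * F + (nu + 1/2) * x powr (nu - 1/2) * (F' * (x/2))
      + (nu + 1/2) * x powr (nu - 1/2) * (x/2) * F' + P * (1/2) * F' + P * (x/2) * (F'' * (x/2))
      = - (1 - (nu^2 - 1/4) / x^2) * bessel_u nu x"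
    unfolding bessel_u_def P_def[symmetric] F P1 P2 using x
    by (simp add: ode field_simps power2_eq_square)
  ultimately show ?thesis by simp
qed

lemma bessel_J_eq_bessel_F:
  assumes nu: "nu \<ge> 0" and x: "x > 0"
  shows "bessel_J nu x = (x/2) powr nu * bessel_F nu (x^2/4)"
proof -
  have summand: "(-1)^m / (fact m * Gamma (real m + nu + 1)) * (x/2) powr (2 * real m + nu)
      = (x/2) powr nu * (bessel_coeff nu m * (x^2/4)^m)" for m
  proof -
    have "(x/2) powr (2 * real m + nu) = (x/2) powr (real (2*m)) * (x/2) powr nu"
      by (simp add: powr_add)
    also have "(x/2) powr (real (2*m)) = (x/2)^(2*m)"
      using x by (intro powr_realpow) simp
    also have "(x/2)^(2*m) = (x^2/4)^m"
      by (simp add: power_mult power_divide)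
    finally show ?thesis by (simp add: bessel_coeff_def mult_ac)
  qed
  show ?thesis unfolding bessel_J_def summand bessel_F_def
    by (rule suminf_mult[OF summable_bessel_coeff[OF nu]])
qed

lemma bessel_J_eq_0_iff:
  "nu \<ge> 0 \<Longrightarrow> x > 0 \<Longrightarrow> bessel_J nu x = 0 \<longleftrightarrow> bessel_u nu x = 0"
  by (simp add: bessel_J_eq_bessel_F bessel_u_def)

text \<open>Grouping the series in pairs gives nonnegative terms, the first one positive.\<close>

lemma bessel_F_pos:
  assumes nu: "nu \<ge> 0" and y: "0 \<le> y" "y < 1"
  shows "bessel_F nu y > 0"
proof -
  define t where "t m = bessel_coeff nu m * y ^ m" for m
  define p where "p n = sum t {n*2..<n*2+2}" for n
  have "t sums bessel_F nu y"
    unfolding t_def bessel_F_def using summable_bessel_coeff[OF nu] by (rule summable_sums)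
  then have sums: "p sums bessel_F nu y" unfolding p_def by (rule sums_group) simp
  have p_eq: "p n = bessel_coeff nu (2*n) * y^(2*n) * (1 - y / ((2 * real n + 1) * (2 * real n + nu + 1)))" for n
  proof -
    have "p n = t (2*n) + t (Suc (2*n))" unfolding p_def by (simp add: mult.commute numeral_2_eq_2)
    then show ?thesis unfolding t_def bessel_coeff_Suc[OF nu] by (simp add: algebra_simps)
  qed
  have factor_pos: "1 - y / ((2 * real n + 1) * (2 * real n + nu + 1)) > 0" for n
  proof -
    have "1 \<le> (2 * real n + 1) * (2 * real n + nu + 1)"
      using mult_mono[of 1 "2 * real n + 1" 1 "2 * real n + nu + 1"] nu by simp
    then show ?thesis using y by (simp add: divide_less_eq)
  qed
  have coeff_pos: "bessel_coeff nu (2*n) > 0" for n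
    unfolding bessel_coeff_def using nu by (auto intro!: divide_pos_pos mult_pos_pos)
  have "p n \<ge> 0" for n
    unfolding p_eq using factor_pos[of n] coeff_pos[of n] y by simp
  moreover have "p 0 > 0" unfolding p_eq using factor_pos[of 0] coeff_pos[of 0] by simp
  ultimately show ?thesis using suminf_pos2[OF sums_summable[OF sums]] sums_unique[OF sums] by simp
qed

lemma bessel_u_pos: "nu \<ge> 0 \<Longrightarrow> 0 < x \<Longrightarrow> x < 2 \<Longrightarrow> bessel_u nu x > 0"
  unfolding bessel_u_def
  by (intro mult_pos_pos bessel_F_pos) (auto simp: power2_eq_square intro!: mult_strict_mono[of x 2 x 2, simplified])

lemma bessel_u_tendsto_0: "nu \<ge> 0 \<Longrightarrow> (bessel_u nu \<longlongrightarrow> 0) (at_right 0)"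
proof -
  assume nu: "nu \<ge> 0"
  have "((\<lambda>t. t powr (nu + 1/2)) \<longlongrightarrow> 0) (at_right 0)"
    by (rule tendsto_zero_powrI) (use nu in \<open>auto intro: tendsto_ident_at eventually_at_rightI[of 0 1]\<close>)
  moreover have "isCont (\<lambda>t. bessel_F nu (t^2/4)) 0"
    using nu by (intro DERIV_isCont) (auto intro!: derivative_eq_intros)
  then have "((\<lambda>t. bessel_F nu (t^2/4)) \<longlongrightarrow> bessel_F nu 0) (at_right 0)"
    by (simp add: isCont_def filterlim_at_split)
  ultimately have "((\<lambda>t. t powr (nu + 1/2) * bessel_F nu (t^2/4)) \<longlongrightarrow> 0 * bessel_F nu 0) (at_right 0)"
    by (rule tendsto_mult)
  then show ?thesis unfolding bessel_u_def[abs_def] by simp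
qed

section \<open>Sturm comparison for \<open>u'' + (1 - c/x\<^sup>2) u = 0\<close>\<close>

locale bessel_normal_ode =
  fixes u u' :: "real \<Rightarrow> real" and c :: real
  assumes DERIV_u: "x > 0 \<Longrightarrow> (u has_real_derivative u' x) (at x)"
    and DERIV_u': "x > 0 \<Longrightarrow> (u' has_real_derivative - (1 - c / x^2) * u x) (at x)"
begin

lemma uminus: "bessel_normal_ode (\<lambda>x. - u x) (\<lambda>x. - u' x) c"
  by unfold_locales (auto intro!: derivative_eq_intros DERIV_u DERIV_u')

lemma isCont_u: "x > 0 \<Longrightarrow> isCont u x"
  using DERIV_u DERIV_isCont by blast

text \<open>The energy \<open>u\<^sup>2 + u'\<^sup>2\<close> has logarithmic derivative bounded on every \<open>[r, \<infinity>)\<close>, \<open>r > 0\<close>,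
  so Gronwall propagates a common zero of \<open>u\<close> and \<open>u'\<close>.\<close>

lemma zero_if_double_zero:
  assumes x0: "x0 > 0" "u x0 = 0" "u' x0 = 0" and x: "x > 0"
  shows "u x = 0"
proof -
  define r where "r = min x x0"
  have r: "r > 0" "r \<le> x" "r \<le> x0" using x0 x by (auto simp: r_def)
  define E where "E t = (u t)^2 + (u' t)^2" for t
  define E' where "E' t = c / t^2 * (2 * u t * u' t)" for t
  have "E x = 0"
  proof (rule gronwall_zero[of x0 x E E' "\<bar>c\<bar> / r^2"])
    fix t assume "min x0 x \<le> t" "t \<le> max x0 x"
    then have t: "r \<le> t" "t > 0" using r by (auto simp: r_def)
    show "(E has_real_derivative E' t) (at t)"
      unfolding E_def[abs_def] E'_def using t
      by (auto intro!: derivative_eq_intros DERIV_u DERIV_u' simp: field_simps)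
    have "\<bar>2 * u t * u' t\<bar> \<le> E t"
      using sum_squares_bound[of "\<bar>u t\<bar>" "\<bar>u' t\<bar>"] unfolding E_def by (simp add: abs_mult)
    moreover have "r^2 \<le> t^2" using t r by (intro power_mono) auto
    ultimately have "\<bar>c\<bar> / t^2 * \<bar>2 * u t * u' t\<bar> \<le> \<bar>c\<bar> / r^2 * E t"
      using r t by (intro mult_mono divide_left_mono) (auto simp: E_def)
    then show "\<bar>E' t\<bar> \<le> \<bar>c\<bar> / r^2 * E t" by (simp add: E'_def abs_mult)
  qed (use x0 in \<open>auto simp: E_def\<close>)
  then show ?thesis unfolding E_def by (simp add: add_nonneg_eq_0_iff)
qed

lemma eventually_nonzero_at:
  assumes "y > 0" "u y \<noteq> 0" and z: "z > 0"
  shows "eventually (\<lambda>t. u t \<noteq> 0) (at z)"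
proof (cases "u z = 0")
  case False
  then show ?thesis using isCont_u[OF z] by (intro tendsto_imp_eventually_ne) (simp add: isCont_def)
next
  case True
  then have "u' z \<noteq> 0" using zero_if_double_zero assms by blast
  moreover have "((\<lambda>t. (u t - u z) / (t - z)) \<longlongrightarrow> u' z) (at z)"
    using DERIV_u[OF z] by (simp add: has_field_derivative_iff)
  ultimately have "eventually (\<lambda>t. (u t - u z) / (t - z) \<noteq> 0) (at z)"
    by (intro tendsto_imp_eventually_ne) auto
  then show ?thesis by eventually_elim (use True in auto)
qed

lemma finite_zeros:
  assumes "y > 0" "u y \<noteq> 0" "a > 0"
  shows "finite {t. a \<le> t \<and> t \<le> b \<and> u t = 0}"
proof -
  have "finite ({a..b} \<inter> {t. u t = 0})"
    using assms eventually_nonzero_at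
    by (intro finite_not_islimpt_in_compact) (auto simp: islimpt_iff_eventually)
  then show ?thesis by (simp add: Int_def)
qed

text \<open>Sturm comparison with \<open>sin (t - a)\<close>: the Wronskian-type quantity \<open>W\<close> is nondecreasing
  because \<open>c \<ge> 0\<close>, which forces \<open>u' b = 0\<close> if \<open>b - a < \<pi>\<close>.\<close>

lemma zero_gap_ge_pi_pos:
  assumes c: "c \<ge> 0" and ab: "0 < a" "a < b" and zeros: "u a = 0" "u b = 0"
    and pos: "\<And>t. a < t \<Longrightarrow> t < b \<Longrightarrow> u t > 0"
  shows "b - a \<ge> pi"
proof (rule ccontr)
  assume short: "\<not> b - a \<ge> pi"
  define W where "W t = u' t * sin (t - a) - u t * cos (t - a)" for t
  have "W a \<le> W b"
  proof (rule DERIV_nonneg_imp_nondecreasing[of a b W])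
    fix t assume t: "a \<le> t" "t \<le> b"
    have "u t \<ge> 0" using pos[of t] zeros t by (cases "t = a \<or> t = b") auto
    moreover have "sin (t - a) \<ge> 0" using t short by (intro sin_ge_zero) auto
    moreover have "(W has_real_derivative c / t^2 * u t * sin (t - a)) (at t)"
      unfolding W_def[abs_def] using t ab
      by (auto intro!: derivative_eq_intros DERIV_u DERIV_u' simp: field_simps)
    moreover have "c / t^2 * u t * sin (t - a) \<ge> 0" using c \<open>u t \<ge> 0\<close> \<open>sin (t - a) \<ge> 0\<close> by simp
    ultimately show "\<exists>y. (W has_real_derivative y) (at t) \<and> y \<ge> 0" by blast
  qed (use ab in simp)
  then have "u' b * sin (b - a) \<ge> 0" by (simp add: W_def zeros)
  moreover have "sin (b - a) > 0" using ab short by (intro sin_gt_zero) auto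
  ultimately have "u' b \<ge> 0" by (simp add: zero_le_mult_iff)
  moreover have "u' b \<le> 0"
    using DERIV_nonpos_if_left_ge[OF DERIV_u ab(2)] pos zeros ab by (auto simp: less_imp_le)
  ultimately have "u' b = 0" by simp
  then have "u ((a + b) / 2) = 0" using zero_if_double_zero[of b "(a + b) / 2"] zeros ab by simp
  then show False using pos[of "(a + b) / 2"] ab by simp
qed

lemma zero_gap_ge_pi:
  assumes "c \<ge> 0" "0 < a" "a < b" "u a = 0" "u b = 0"
    and nz: "\<And>t. a < t \<Longrightarrow> t < b \<Longrightarrow> u t \<noteq> 0"
  shows "b - a \<ge> pi"
proof -
  interpret neg: bessel_normal_ode "\<lambda>x. - u x" "\<lambda>x. - u' x" c by (rule uminus)
  from nonzero_on_interval_same_sign[of a b u] nz assms(2) isCont_u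
  show ?thesis
    using zero_gap_ge_pi_pos[OF assms(1-5)] neg.zero_gap_ge_pi_pos[OF assms(1-3)] assms(4,5)
    by fastforce
qed

text \<open>Sturm comparison with \<open>sin (w (t - s))\<close>, which vanishes at both ends of the window.\<close>

lemma not_positive_on_window:
  assumes w: "w > 0" and s: "s > 0"
    and q: "\<And>t. s \<le> t \<Longrightarrow> t \<le> s + pi / w \<Longrightarrow> 1 - c / t^2 > w^2"
    and pos: "\<And>t. s < t \<Longrightarrow> t < s + pi / w \<Longrightarrow> u t > 0"
  shows False
proof -
  define e where "e = s + pi / w"
  have se: "s < e" using w by (simp add: e_def)
  define W where "W t = w * cos (w * (t - s)) * u t - sin (w * (t - s)) * u' t" for t
  have DERIV_W: "(W has_real_derivative (1 - c / t^2 - w^2) * sin (w * (t - s)) * u t) (at t)"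
    if "t > 0" for t
    unfolding W_def[abs_def] using that
    by (auto intro!: derivative_eq_intros DERIV_u DERIV_u' simp: algebra_simps power2_eq_square)
  have "W s < W e"
  proof (rule DERIV_pos_imp_increasing_open[OF se])
    fix t assume t: "s < t" "t < e"
    have "sin (w * (t - s)) > 0" using t w by (intro sin_gt_zero) (auto simp: e_def field_simps)
    moreover have "1 - c / t^2 - w^2 > 0" "u t > 0" using q[of t] pos[of t] t by (auto simp: e_def)
    ultimately have "(1 - c / t^2 - w^2) * sin (w * (t - s)) * u t > 0" by simp
    then show "\<exists>y. (W has_real_derivative y) (at t) \<and> y > 0" using DERIV_W[of t] t s by auto
  next
    show "continuous_on {s..e} W"
    proof (intro continuous_at_imp_continuous_on ballI)
      fix t assume "t \<in> {s..e}"
      then show "isCont W t" using s by (intro DERIV_isCont[OF DERIV_W]) simp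
    qed
  qed
  moreover have "W s = w * u s" by (simp add: W_def)
  moreover have "W e = - w * u e"
  proof -
    have "w * (e - s) = pi" using w by (simp add: e_def)
    then show ?thesis by (simp add: W_def)
  qed
  moreover have "u s \<ge> 0"
  proof (rule tendsto_lowerbound)
    show "(u \<longlongrightarrow> u s) (at_right s)"
      using isCont_u[OF s] by (simp add: isCont_def filterlim_at_split)
    show "eventually (\<lambda>t. 0 \<le> u t) (at_right s)"
      unfolding eventually_at_right_field using se pos by (intro exI[of _ e]) (auto simp: e_def less_imp_le)
  qed simp
  moreover have "u e \<ge> 0"
  proof (rule tendsto_lowerbound)
    show "(u \<longlongrightarrow> u e) (at_left e)"
      using isCont_u[of e] s se by (simp add: isCont_def filterlim_at_split)
    show "eventually (\<lambda>t. 0 \<le> u t) (at_left e)"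
      unfolding eventually_at_left_field using se pos by (intro exI[of _ s]) (auto simp: e_def less_imp_le)
  qed simp
  ultimately have "w * u s + w * u e < 0" by simp
  moreover have "w * u s + w * u e \<ge> 0" using \<open>u s \<ge> 0\<close> \<open>u e \<ge> 0\<close> w by simp
  ultimately show False by simp
qed

lemma exists_zero_in_window:
  assumes w: "w > 0" and s: "s > 0"
    and q: "\<And>t. s \<le> t \<Longrightarrow> t \<le> s + pi / w \<Longrightarrow> 1 - c / t^2 > w^2"
  shows "\<exists>t. s < t \<and> t < s + pi / w \<and> u t = 0"
proof (rule ccontr)
  assume "\<not> ?thesis"
  then have nz: "\<And>t. s < t \<Longrightarrow> t < s + pi / w \<Longrightarrow> u t \<noteq> 0" by auto
  interpret neg: bessel_normal_ode "\<lambda>x. - u x" "\<lambda>x. - u' x" c by (rule uminus)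
  from nonzero_on_interval_same_sign[of s "s + pi / w" u] nz s isCont_u
  show False
    using not_positive_on_window[OF w s q] neg.not_positive_on_window[OF w s q] by fastforce
qed

text \<open>Where \<open>t\<^sup>2 \<le> c\<close> and \<open>u > 0\<close> we have \<open>u'' \<ge> 0\<close>; a convex function that is positive on
  \<open>(0, z)\<close> cannot tend to \<open>0\<close> at both ends.\<close>

lemma first_zero_sq_gt:
  assumes lim: "(u \<longlongrightarrow> 0) (at_right 0)" and z: "z > 0" "u z = 0"
    and pos: "\<And>t. 0 < t \<Longrightarrow> t < z \<Longrightarrow> u t > 0"
  shows "z^2 > c"
proof (rule ccontr)
  assume "\<not> z^2 > c"
  then have cz: "z^2 \<le> c" by simp
  have u'_mono: "u' t1 \<le> u' t2" if "0 < t1" "t1 \<le> t2" "t2 < z" for t1 t2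
  proof (rule DERIV_nonneg_imp_nondecreasing[OF that(2)])
    fix t assume t: "t1 \<le> t" "t \<le> t2"
    then have "t^2 \<le> z^2" using that by (intro power_mono) auto
    then have "t^2 \<le> c" using cz by simp
    then have "1 \<le> c / t^2" using t that by simp
    then have "- (1 - c / t^2) * u t \<ge> 0" using pos[of t] t that by simp
    then show "\<exists>y. (u' has_real_derivative y) (at t) \<and> y \<ge> 0"
      using DERIV_u'[of t] t that by auto
  qed
  obtain \<xi> where \<xi>: "z/2 < \<xi>" "\<xi> < z" "u z - u (z/2) = (z - z/2) * u' \<xi>"
    using MVT2[of "z/2" z u u'] z DERIV_u by force
  have "u (z/2) > 0" using pos z by simp
  then have "(z - z/2) * u' \<xi> < 0" using \<xi>(3) z(2) by linarith
  then have "u' \<xi> < 0" using z by (simp add: mult_less_0_iff)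
  have "u (z/2) \<le> u t" if "0 < t" "t \<le> z/2" for t
  proof (rule DERIV_nonpos_imp_nonincreasing[OF that(2)])
    fix r assume "t \<le> r" "r \<le> z/2"
    then show "\<exists>y. (u has_real_derivative y) (at r) \<and> y \<le> 0"
      using DERIV_u[of r] u'_mono[of r \<xi>] \<open>u' \<xi> < 0\<close> \<xi> that by (intro exI conjI) auto
  qed
  then have "u (z/2) \<le> 0"
    using z by (intro tendsto_lowerbound[OF lim]) (auto simp: eventually_at_right_field intro!: exI[of _ "z/2"])
  then show False using \<open>u (z/2) > 0\<close> by simp
qed

end

section \<open>Enumerating a discrete set of positive reals\<close>

definition points_below :: "(real \<Rightarrow> bool) \<Rightarrow> real \<Rightarrow> real set" where
  "points_below P x = {y. 0 < y \<and> y < x \<and> P y}"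

definition nth_point :: "(real \<Rightarrow> bool) \<Rightarrow> nat \<Rightarrow> real" where
  "nth_point P m = (THE x. 0 < x \<and> P x \<and> card (points_below P x) = m - 1)"

locale discrete_positive_points =
  fixes P :: "real \<Rightarrow> bool"
  assumes finite_points_below: "finite (points_below P x)"
    and unbounded_points: "\<exists>z > x. P z"
begin

lemma next_point:
  assumes "x \<ge> 0"
  obtains x' where "x < x'" "P x'" "\<And>y. x < y \<Longrightarrow> y < x' \<Longrightarrow> \<not> P y"
proof -
  obtain z where z: "z > x" "P z" using unbounded_points by blast
  define S where "S = {y. x < y \<and> y < z + 1 \<and> P y}"
  have "S \<subseteq> points_below P (z + 1)" using assms by (auto simp: S_def points_below_def)
  moreover have "z \<in> S" using z by (simp add: S_def)
  ultimately have S: "finite S" "S \<noteq> {}" using finite_points_below by (auto intro: finite_subset)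
  have "Min S \<in> S" using S by (rule Min_in)
  moreover have "\<not> P y" if "x < y" "y < Min S" for y
    using Min_le[OF S(1), of y] that \<open>Min S \<in> S\<close> by (auto simp: S_def)
  ultimately show ?thesis using that by (auto simp: S_def)
qed

lemma exists_point_with_card:
  "m \<ge> 1 \<Longrightarrow> \<exists>x. 0 < x \<and> P x \<and> card (points_below P x) = m - 1"
proof (induction m rule: dec_induct)
  case base
  obtain x where x: "0 < x" "P x" "\<And>y. 0 < y \<Longrightarrow> y < x \<Longrightarrow> \<not> P y"
    using next_point[of 0] by auto
  then have "points_below P x = {}" by (auto simp: points_below_def)
  then show ?case using x by (intro exI[of _ x]) simp
next
  case (step m)
  then obtain x where x: "0 < x" "P x" "card (points_below P x) = m - 1" by auto
  obtain x' where x': "x < x'" "P x'" "\<And>y. x < y \<Longrightarrow> y < x' \<Longrightarrow> \<not> P y"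
    using next_point[of x] x by auto
  have "points_below P x' = insert x (points_below P x)"
    using x x' by (auto simp: points_below_def) (meson not_less_iff_gr_or_eq)
  moreover have "x \<notin> points_below P x" by (simp add: points_below_def)
  ultimately have "card (points_below P x') = m"
    using x(3) step(1) finite_points_below by simp
  then show ?case using x x' by (intro exI[of _ x']) simp
qed

lemma card_points_below_less:
  assumes "0 < x" "P x" "x < x'"
  shows "card (points_below P x) < card (points_below P x')"
proof (rule psubset_card_mono[OF finite_points_below])
  show "points_below P x \<subset> points_below P x'"
    using assms by (auto simp: points_below_def)
qed

lemma nth_point:
  assumes "m \<ge> 1"
  shows "0 < nth_point P m \<and> P (nth_point P m) \<and> card (points_below P (nth_point P m)) = m - 1"
  unfolding nth_point_def
proof (rule theI')
  show "\<exists>!x. 0 < x \<and> P x \<and> card (points_below P x) = m - 1"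
    using exists_point_with_card[OF assms] card_points_below_less
    by (metis linorder_neqE_linordered_idom less_irrefl)
qed

lemma nth_point_less:
  assumes "m \<ge> 1" "m \<le> card (points_below P t)"
  shows "nth_point P m < t"
proof (rule ccontr)
  assume "\<not> nth_point P m < t"
  then have "points_below P t \<subseteq> points_below P (nth_point P m)" by (auto simp: points_below_def)
  then have "card (points_below P t) \<le> m - 1"
    using card_mono[OF finite_points_below] nth_point[OF assms(1)] by metis
  then show False using assms by simp
qed

lemma nth_point_less_Suc: "m \<ge> 1 \<Longrightarrow> nth_point P m < nth_point P (Suc m)"
  using nth_point_less[of m "nth_point P (Suc m)"] nth_point[of "Suc m"] by simp

lemma not_between_nth_points:
  assumes "m \<ge> 1" "nth_point P m < y" "y < nth_point P (Suc m)"
  shows "\<not> P y"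
proof
  assume "P y"
  have "card (points_below P (nth_point P m)) < card (points_below P y)"
    using card_points_below_less nth_point[OF assms(1)] assms(2) by blast
  moreover have "card (points_below P y) < card (points_below P (nth_point P (Suc m)))"
    using card_points_below_less[OF _ \<open>P y\<close> assms(3)] nth_point[OF assms(1)] assms(2) by simp
  ultimately show False using nth_point[OF assms(1)] nth_point[of "Suc m"] assms(1) by simp
qed

lemma not_below_first_point: "0 < y \<Longrightarrow> y < nth_point P 1 \<Longrightarrow> \<not> P y"
  using nth_point[of 1] finite_points_below[of "nth_point P 1"] by (auto simp: points_below_def)

end

section \<open>Zeros of \<open>J\<^sub>\<nu>\<close>\<close>

lemma bessel_normal_ode_bessel_u: "nu \<ge> 0 \<Longrightarrow> bessel_normal_ode (bessel_u nu) (bessel_u' nu) (nu^2 - 1/4)"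
  by (rule bessel_normal_ode.intro; rule DERIV_bessel_u DERIV_bessel_u'; simp)

lemma bessel_J_zero_ge_2: "nu \<ge> 0 \<Longrightarrow> 0 < x \<Longrightarrow> bessel_J nu x = 0 \<Longrightarrow> 2 \<le> x"
  using bessel_u_pos bessel_J_eq_0_iff by force

lemma bessel_J_zero_in_window:
  assumes nu: "nu \<ge> 0" and w: "0 < w" "w < 1" and s: "1 \<le> s" "\<bar>nu^2 - 1/4\<bar> < (1 - w^2) * s"
  shows "\<exists>t. s < t \<and> t < s + pi / w \<and> bessel_J nu t = 0"
proof -
  interpret bessel_normal_ode "bessel_u nu" "bessel_u' nu" "nu^2 - 1/4"
    by (rule bessel_normal_ode_bessel_u[OF nu])
  have "\<exists>t. s < t \<and> t < s + pi / w \<and> bessel_u nu t = 0"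
  proof (rule exists_zero_in_window[OF w(1)])
    fix t assume t: "s \<le> t" "t \<le> s + pi / w"
    have "(1 - w^2) * s \<le> (1 - w^2) * t" using t w by (intro mult_left_mono) (auto simp: power_le_one)
    then have "\<bar>nu^2 - 1/4\<bar> / t < 1 - w^2" using s t by (simp add: divide_less_eq mult.commute)
    moreover have "(nu^2 - 1/4) / t^2 \<le> \<bar>nu^2 - 1/4\<bar> / t"
      using s t by (intro order.trans[OF divide_right_mono divide_left_mono]) (auto simp: power2_eq_square)
    ultimately show "1 - (nu^2 - 1/4) / t^2 > w^2" by linarith
  qed (use s in simp)
  then show ?thesis using bessel_J_eq_0_iff[OF nu] s by force
qed

lemma discrete_positive_points_bessel_J_zeros:
  assumes nu: "nu \<ge> 0"
  shows "discrete_positive_points (\<lambda>y. bessel_J nu y = 0)"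
proof
  interpret bessel_normal_ode "bessel_u nu" "bessel_u' nu" "nu^2 - 1/4"
    by (rule bessel_normal_ode_bessel_u[OF nu])
  fix x
  have "points_below (\<lambda>y. bessel_J nu y = 0) x \<subseteq> {t. 1 \<le> t \<and> t \<le> x \<and> bessel_u nu t = 0}"
    using bessel_J_zero_ge_2[OF nu] bessel_J_eq_0_iff[OF nu] by (force simp: points_below_def)
  moreover have "finite {t. 1 \<le> t \<and> t \<le> x \<and> bessel_u nu t = 0}"
    using bessel_u_pos[OF nu, of 1] by (intro finite_zeros[of 1]) auto
  ultimately show "finite (points_below (\<lambda>y. bessel_J nu y = 0) x)" by (rule finite_subset)
  define a where "a = \<bar>nu^2 - 1/4\<bar>"
  define s where "s = max x 1 + 2 * a + 1"
  have "a \<ge> 0" "x \<le> max x 1" "1 \<le> max x 1" by (simp_all add: a_def)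
  then have "1 \<le> s" "x < s" "a < (1 - (1/2)^2) * s" unfolding s_def by (simp_all add: power2_eq_square)
  then obtain t where "s < t" "bessel_J nu t = 0"
    using bessel_J_zero_in_window[OF nu, of "1/2" s] by (auto simp: a_def)
  then show "\<exists>z > x. bessel_J nu z = 0" using \<open>x < s\<close> by (intro exI[of _ t]) simp
qed

lemma bessel_zero_eq_nth_point: "bessel_zero nu m = nth_point (\<lambda>y. bessel_J nu y = 0) m"
  by (simp add: bessel_zero_def nth_point_def points_below_def)

lemma bessel_zero_pos: "nu \<ge> 0 \<Longrightarrow> m \<ge> 1 \<Longrightarrow> 0 < bessel_zero nu m"
  using discrete_positive_points.nth_point[OF discrete_positive_points_bessel_J_zeros]
  by (simp add: bessel_zero_eq_nth_point)

lemma bessel_J_bessel_zero: "nu \<ge> 0 \<Longrightarrow> m \<ge> 1 \<Longrightarrow> bessel_J nu (bessel_zero nu m) = 0"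
  using discrete_positive_points.nth_point[OF discrete_positive_points_bessel_J_zeros]
  by (simp add: bessel_zero_eq_nth_point)

lemma bessel_zero_less_Suc: "nu \<ge> 0 \<Longrightarrow> m \<ge> 1 \<Longrightarrow> bessel_zero nu m < bessel_zero nu (Suc m)"
  using discrete_positive_points.nth_point_less_Suc[OF discrete_positive_points_bessel_J_zeros]
  by (simp add: bessel_zero_eq_nth_point)

lemma bessel_zero_ge_2: "nu \<ge> 0 \<Longrightarrow> m \<ge> 1 \<Longrightarrow> 2 \<le> bessel_zero nu m"
  using bessel_J_zero_ge_2 bessel_zero_pos bessel_J_bessel_zero by blast

lemma bessel_zero_mono:
  assumes "nu \<ge> 0" "1 \<le> m" "m \<le> m'"
  shows "bessel_zero nu m \<le> bessel_zero nu m'"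
  using assms(3)
proof (induction m' rule: dec_induct)
  case (step k)
  then show ?case using bessel_zero_less_Suc[of nu k] assms(1,2) by simp
qed simp

lemma bessel_zero_gap_ge_pi:
  assumes nu: "nu \<ge> 1/2" and m: "m \<ge> 1"
  shows "pi \<le> bessel_zero nu (Suc m) - bessel_zero nu m"
proof -
  have nu0: "nu \<ge> 0" using nu by simp
  interpret zeros: discrete_positive_points "\<lambda>y. bessel_J nu y = 0"
    by (rule discrete_positive_points_bessel_J_zeros[OF nu0])
  interpret bessel_normal_ode "bessel_u nu" "bessel_u' nu" "nu^2 - 1/4"
    by (rule bessel_normal_ode_bessel_u[OF nu0])
  have "(1/2)^2 \<le> nu^2" using nu by (intro power_mono) auto
  then have "nu^2 - 1/4 \<ge> 0" by (simp add: power2_eq_square)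
  moreover have "0 < bessel_zero nu m" "bessel_zero nu m < bessel_zero nu (Suc m)"
    using bessel_zero_pos[OF nu0 m] bessel_zero_less_Suc[OF nu0 m] .
  moreover have "bessel_u nu (bessel_zero nu m) = 0" "bessel_u nu (bessel_zero nu (Suc m)) = 0"
    using bessel_J_bessel_zero[OF nu0] bessel_zero_pos[OF nu0] bessel_J_eq_0_iff[OF nu0] m by simp_all
  moreover have "bessel_u nu t \<noteq> 0" if "bessel_zero nu m < t" "t < bessel_zero nu (Suc m)" for t
    using zeros.not_between_nth_points[OF m] that bessel_J_eq_0_iff[OF nu0, of t]
      bessel_zero_pos[OF nu0 m]
    by (simp add: bessel_zero_eq_nth_point)
  ultimately show ?thesis by (intro zero_gap_ge_pi) auto
qed

lemma bessel_zero_lower_bound: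
  assumes "nu \<ge> 1/2" "m \<ge> 1"
  shows "2 + (real m - 1) * pi \<le> bessel_zero nu m"
  using assms(2)
proof (induction m rule: dec_induct)
  case base
  then show ?case using bessel_zero_ge_2[of nu 1] assms(1) by simp
next
  case (step m)
  then show ?case using bessel_zero_gap_ge_pi[OF assms(1) step(1)] by (simp add: algebra_simps)
qed

lemma bessel_zero_upper_bound:
  assumes nu: "nu \<ge> 0" and w: "0 < w" "w < 1" and X: "1 \<le> X" "\<bar>nu^2 - 1/4\<bar> < (1 - w^2) * X"
    and m: "m \<ge> 1"
  shows "bessel_zero nu m < X + real m * pi / w"
  using m
proof (induction m rule: dec_induct)
  interpret zeros: discrete_positive_points "\<lambda>y. bessel_J nu y = 0"
    by (rule discrete_positive_points_bessel_J_zeros[OF nu])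
  have window: "\<exists>t. X + real m * pi / w < t \<and> t < X + real (Suc m) * pi / w \<and> bessel_J nu t = 0" for m
  proof -
    have "(1 - w^2) * X \<le> (1 - w^2) * (X + real m * pi / w)"
      using w by (intro mult_left_mono) (auto simp: power_le_one)
    then have "\<bar>nu^2 - 1/4\<bar> < (1 - w^2) * (X + real m * pi / w)" using X(2) by linarith
    moreover have "0 \<le> real m * pi / w" using w by simp
    then have "1 \<le> X + real m * pi / w" using X(1) by linarith
    moreover have "X + real m * pi / w + pi / w = X + real (Suc m) * pi / w"
      by (simp add: algebra_simps add_divide_distrib)
    ultimately show ?thesis using bessel_J_zero_in_window[OF nu w] by metis
  qed
  {
    case base
    obtain t where t: "X < t" "t < X + pi / w" "bessel_J nu t = 0" using window[of 0] by auto
    then have "\<not> t < bessel_zero nu 1"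
      using zeros.not_below_first_point[of t] X by (auto simp: bessel_zero_eq_nth_point)
    then show ?case using t by simp
  next
    case (step m)
    obtain t where t: "X + real m * pi / w < t" "t < X + real (Suc m) * pi / w" "bessel_J nu t = 0"
      using window[of m] by auto
    then have "\<not> t < bessel_zero nu (Suc m)"
      using zeros.not_between_nth_points[OF step(1), of t] step(3) by (auto simp: bessel_zero_eq_nth_point)
    then show ?case using t by simp
  }
qed

lemma bessel_zero_1_sq_gt:
  assumes nu: "nu \<ge> 0"
  shows "nu^2 - 1/4 < (bessel_zero nu 1)^2"
proof -
  interpret zeros: discrete_positive_points "\<lambda>y. bessel_J nu y = 0"
    by (rule discrete_positive_points_bessel_J_zeros[OF nu])
  interpret bessel_normal_ode "bessel_u nu" "bessel_u' nu" "nu^2 - 1/4"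
    by (rule bessel_normal_ode_bessel_u[OF nu])
  define z where "z = bessel_zero nu 1"
  have z: "0 < z" "bessel_u nu z = 0"
    using bessel_zero_pos[OF nu] bessel_J_bessel_zero[OF nu] bessel_J_eq_0_iff[OF nu] by (simp_all add: z_def)
  have nz: "bessel_u nu t \<noteq> 0" if "0 < t" "t < z" for t
    using zeros.not_below_first_point[of t] that bessel_J_eq_0_iff[OF nu, of t]
    by (simp add: z_def bessel_zero_eq_nth_point)
  have "min 1 (z/2) > 0" "min 1 (z/2) < z" "bessel_u nu (min 1 (z/2)) > 0"
    using z bessel_u_pos[OF nu, of "min 1 (z/2)"] by auto
  then have pos: "bessel_u nu t > 0" if "0 < t" "t < z" for t
    using nonzero_on_interval_same_sign[of 0 z "bessel_u nu"] isCont_u nz that by fastforce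
  show ?thesis
    using first_zero_sq_gt[OF bessel_u_tendsto_0[OF nu] z pos] by (simp add: z_def)
qed

lemma bessel_zero_1_ge:
  assumes nu: "nu \<ge> 0"
  shows "(nu + 1) / 4 \<le> bessel_zero nu 1"
proof (cases "nu \<le> 1")
  case True
  then show ?thesis using bessel_zero_ge_2[OF nu, of 1] by simp
next
  case False
  have "1 * nu \<le> nu * nu" using False by (intro mult_right_mono) auto
  then have "20 + 8 * nu \<le> 60 * (nu * nu)" using False by linarith
  then have "((nu + 1) / 4)^2 \<le> nu^2 - 1/4" by (simp add: power2_eq_square field_simps)
  then have "((nu + 1) / 4)^2 \<le> (bessel_zero nu 1)^2" using bessel_zero_1_sq_gt[OF nu] by simp
  from power2_le_imp_le[OF this] show ?thesis using bessel_zero_pos[OF nu, of 1] by linarith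
qed

section \<open>The constants \<open>c(k,d)\<close>\<close>

definition c_denom :: "nat \<Rightarrow> nat \<Rightarrow> real" where
  "c_denom k d =
    (if d = 2 then 2 * bessel_zero 0 1 + pi * (real k - 1)
     else if odd k then 2 * bessel_zero (real d / 2 - 1) ((k + 1) div 2)
     else bessel_zero (real d / 2 - 1) (k div 2) + bessel_zero (real d / 2 - 1) (k div 2 + 1))"

lemma c_kd_eq: "c_kd k d = (pi * real k / c_denom k d)^2"
  by (simp add: c_kd_def c_denom_def power_divide power_mult_distrib)

lemma c_denom_cases:
  assumes "k \<ge> 1" "d \<noteq> 2"
  obtains (odd) a where "k = 2 * a + 1" "c_denom k d = 2 * bessel_zero (real d / 2 - 1) (a + 1)"
    | (even) a where "a \<ge> 1" "k = 2 * a"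
        "c_denom k d = bessel_zero (real d / 2 - 1) a + bessel_zero (real d / 2 - 1) (a + 1)"
proof (cases "odd k")
  case True
  then obtain a where "k = 2 * a + 1" by (elim oddE)
  then show ?thesis using odd assms by (simp add: c_denom_def)
next
  case False
  then obtain a where "k = 2 * a" by (auto elim: evenE)
  then show ?thesis using even assms by (simp add: c_denom_def)
qed

lemma c_denom_gt:
  assumes k: "k \<ge> 1" and d: "d \<ge> 2"
  shows "pi * real k < c_denom k d"
proof (cases "d = 2")
  case True
  then show ?thesis using bessel_zero_ge_2[of 0 1] pi_less_4 by (simp add: c_denom_def algebra_simps)
next
  case False
  define nu where "nu = real d / 2 - 1"
  have nu: "nu \<ge> 1/2" unfolding nu_def using d False by simp
  note lower = bessel_zero_lower_bound[OF nu]
  from k False show ?thesis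
  proof (cases rule: c_denom_cases)
    case (odd a)
    then show ?thesis using lower[of "a + 1"] pi_less_4 by (simp add: nu_def algebra_simps)
  next
    case (even a)
    then show ?thesis using lower[of a] lower[of "a + 1"] pi_less_4 by (simp add: nu_def algebra_simps)
  qed
qed

lemma c_denom_le:
  assumes d: "d \<ge> 2" and w: "0 < w" "w < 1"
  shows "\<exists>B. \<forall>k\<ge>1. c_denom k d \<le> pi * real k / w + B"
proof (cases "d = 2")
  case True
  have "pi * real k \<le> pi * real k / w" for k
    using w by (simp add: divide_simps mult_left_le)
  then show ?thesis using True by (intro exI[of _ "2 * bessel_zero 0 1 - pi"]) (simp add: c_denom_def algebra_simps)
next
  case False
  define nu where "nu = real d / 2 - 1"
  have nu: "nu \<ge> 0" unfolding nu_def using d False by simp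
  define X where "X = \<bar>nu^2 - 1/4\<bar> / (1 - w^2) + 1"
  have w2: "0 < 1 - w^2" using w by (simp add: power_less_one_iff)
  have "(1 - w^2) * X = \<bar>nu^2 - 1/4\<bar> + (1 - w^2)" unfolding X_def using w2 by (simp add: field_simps)
  then have X: "1 \<le> X" "\<bar>nu^2 - 1/4\<bar> < (1 - w^2) * X" using w2 by (simp_all add: X_def)
  define q where "q = pi / w"
  have upper: "bessel_zero nu m < X + real m * q" if "m \<ge> 1" for m
    using bessel_zero_upper_bound[OF nu w X that] by (simp add: q_def)
  have "c_denom k d \<le> real k * q + (2 * X + q)" if k: "k \<ge> 1" for k
    using k False
  proof (cases rule: c_denom_cases)
    case (odd a)
    then show ?thesis using upper[of "a + 1"] by (simp add: nu_def algebra_simps)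
  next
    case (even a)
    then show ?thesis using upper[of a] upper[of "a + 1"] by (simp add: nu_def algebra_simps)
  qed
  then show ?thesis by (intro exI[of _ "2 * X + q"]) (simp add: q_def mult.commute)
qed

lemma c_denom_ge:
  assumes k: "k \<ge> 1" and d: "d \<ge> 2"
  shows "real d / 4 \<le> c_denom k d"
proof (cases "d = 2")
  case True
  have "0 \<le> pi * (real k - 1)" using k by simp
  then show ?thesis using True bessel_zero_ge_2[of 0 1] by (simp add: c_denom_def)
next
  case False
  define nu where "nu = real d / 2 - 1"
  have nu: "nu \<ge> 0" unfolding nu_def using d False by simp
  have "real d / 4 \<le> 2 * bessel_zero nu 1" using bessel_zero_1_ge[OF nu] by (simp add: nu_def)
  also from k False have "\<dots> \<le> c_denom k d"
  proof (cases rule: c_denom_cases)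
    case (odd a)
    then show ?thesis using bessel_zero_mono[OF nu, of 1 "a + 1"] by (simp add: nu_def)
  next
    case (even a)
    then show ?thesis using bessel_zero_mono[OF nu, of 1 a] bessel_zero_mono[OF nu, of 1 "a + 1"]
      by (simp add: nu_def)
  qed
  finally show ?thesis .
qed

lemma c_kd_less_1: "k \<ge> 1 \<Longrightarrow> d \<ge> 2 \<Longrightarrow> c_kd k d < 1"
proof -
  assume "k \<ge> 1" "d \<ge> 2"
  then have "0 < pi * real k" "pi * real k < c_denom k d" using c_denom_gt by auto
  then show ?thesis unfolding c_kd_eq by (simp add: power_less_one_iff)
qed

lemma c_kd_tendsto_1:
  assumes d: "d \<ge> 2"
  shows "(\<lambda>k. c_kd k d) \<longlonglongrightarrow> 1"
proof -
  have "(\<lambda>k. pi * real k / c_denom k d) \<longlonglongrightarrow> 1"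
    by (rule ratio_tendsto_1[OF pi_gt_zero c_denom_gt[OF _ d] c_denom_le[OF d]])
  from tendsto_power[OF this, of 2] show ?thesis by (simp add: c_kd_eq)
qed

lemma c_kd_le: "k \<ge> 1 \<Longrightarrow> d \<ge> 2 \<Longrightarrow> c_kd k d \<le> 16 * (pi * real k)^2 / (real d)^2"
proof -
  assume k: "k \<ge> 1" and d: "d \<ge> 2"
  have "(real d / 4)^2 \<le> (c_denom k d)^2" using c_denom_ge[OF k d] by (intro power_mono) simp_all
  moreover have "0 < real d / 4" "0 < c_denom k d" using d c_denom_ge[OF k d] by simp_all
  ultimately have "(pi * real k)^2 / (c_denom k d)^2 \<le> (pi * real k)^2 / (real d / 4)^2"
    by (intro divide_left_mono) simp_all
  then show ?thesis by (simp add: c_kd_eq power_divide mult.commute)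
qed

theorem proposition3p1:
  shows "(\<forall>k d. k \<ge> 1 \<longrightarrow> d \<ge> 2 \<longrightarrow> c_kd k d < 1)
       \<and> (\<forall>d. d \<ge> 2 \<longrightarrow> (\<lambda>k. c_kd k d) \<longlonglongrightarrow> 1)
       \<and> (\<forall>k. k \<ge> 1 \<longrightarrow> (\<exists>C>0. \<forall>d. d \<ge> 2 \<longrightarrow> c_kd k d \<le> C / (real d)^2))"
proof (intro conjI allI impI)
  show "c_kd k d < 1" if "k \<ge> 1" "d \<ge> 2" for k d using c_kd_less_1 that .
  show "(\<lambda>k. c_kd k d) \<longlonglongrightarrow> 1" if "d \<ge> 2" for d using c_kd_tendsto_1 that .
  show "\<exists>C>0. \<forall>d. d \<ge> 2 \<longrightarrow> c_kd k d \<le> C / (real d)^2" if "k \<ge> 1" for k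
    using c_kd_le[OF that] that by (intro exI[of _ "16 * (pi * real k)^2"]) auto
qed

end
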